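(* Let $n\ge2$, $l\ge1$, $\mathfrak g=D^{(2)}_{n+1}$, $B$ the level-$l$ perfect crystal of the context, $\lambda=l\Lambda_0$, $d=2n$, and $i^{(j)}_a=a-1$ for $1\le a\le n+1$, $i^{(j)}_a=2n+1-a$ for $n+2\le a\le 2n$ (all $j\ge1$). Then: (II) $B^{(j)}_d=B$ for all $j\ge1$; (III) $\langle\lambda_j,h_{i^{(j)}_a}\rangle\le\varepsilon_{i^{(j)}_a}(b)$ for all $j\ge1$, $1\le a\le d$, $b\in B^{(j)}_{a-1}$; (IV') for all $j\ge1$, $a=1,\dots,d$: $\varepsilon_{i^{(j)}_{a+1}}(b^{(j)}_a)=0$, $\varphi_{i^{(j)}_{a+1}}(b^{(j)}_a)>0$ (with $i^{(j)}_{d+1}:=i^{(j+1)}_1$), and $b^{(j+1)}_0=\tilde f_{i^{(j+1)}_1}^mb^{(j)}_d$ with $m=\langle\lambda_{j+1},h_{i^{(j+1)}_1}\rangle$. Moreover $B^{(j)}_0=\{(0,\dots,0)\}$, $B^{(j)}_{2n}=B$; for $1\le a\le n$, $B^{(j)}_a$ is the set of $b\in B$ with all coordinates $0$ except possibly $x_1,\dots,x_a$; for $1\le a\le n-1$, $B^{(j)}_{n+a}$ is the set of $b\in B$ with all coordinates $0$ except possibly $x_1,\dots,x_n,x_0,\bar x_n,\dots,\bar x_{n-a+1}$. Also $b^{(j)}_0=(0,\dots,0)$, and for $1\le a\le n$, $b^{(j)}_a$ has $x_a=l$ and $b^{(j)}_{n+a}$ has $\bar x_{n-a+1}=l$, all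 other coordinates $0$.
   Context: $(x)_+=\max(x,0)$. $B=\{(x_1,\dots,x_n,x_0,\bar x_n,\dots,\bar x_1)\in\mathbb Z^{2n}\times\{0,1\}: x_0\in\{0,1\},\ x_i,\bar x_i\ge0,\ \sum_{i=1}^n(x_i+\bar x_i)\le l\}$. Crystal structure: $\tilde f_0b=(x_1+1,x_2,\dots,\bar x_1)$ if $x_1\ge\bar x_1$, $(x_1,\dots,\bar x_2,\bar x_1-1)$ if $x_1<\bar x_1$; for $1\le i\le n-1$, $\tilde f_ib$ replaces $(x_i,x_{i+1})$ by $(x_i-1,x_{i+1}+1)$ if $x_{i+1}\ge\bar x_{i+1}$, and $(\bar x_{i+1},\bar x_i)$ by $(\bar x_{i+1}-1,\bar x_i+1)$ if $x_{i+1}<\bar x_{i+1}$; $\tilde f_nb$ replaces $(x_n,x_0)$ by $(x_n-1,x_0+1)$ if $x_0=0$, and $(x_0,\bar x_n)$ by $(x_0-1,\bar x_n+1)$ if $x_0=1$; $\tilde e_ib=b'$ iff $\tilde f_ib'=b$; results outside $B$ mean $0$. With $s(b)=\sum_{i=1}^n(x_i+\bar x_i)$: $\varphi_0(b)=l-x_0-s(b)+2(\bar x_1-x_1)_+$, $\varepsilon_0(b)=l-x_0-s(b)+2(x_1-\bar x_1)_+$; $\varphi_i(b)=x_i+(\bar x_{i+1}-x_{i+1})_+$, $\varepsilon_i(b)=\bar x_i+(x_{i+1}-\bar x_{i+1})_+$ ($1\le i\le n-1$); $\varphi_n(b)=2x_n+x_0$, $\varepsilon_n(b)=2\bar x_n+x_0$.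 For $\lambda=l\Lambda_0$: $\lambda_j=l\Lambda_0$ and $\overline b_j=(0,\dots,0)$ for all $j$; $\langle\lambda_j,h_i\rangle$ is the coefficient of $\Lambda_i$ in $\lambda_j$. Given $d$, $i^{(j)}_a$: $B^{(j)}_0=\{\overline b_j\}$, $B^{(j)}_a=\bigcup_{n\ge0}\tilde f_{i^{(j)}_a}^nB^{(j)}_{a-1}\setminus\{0\}$; $b^{(j)}_0=\overline b_j$, $b^{(j)}_a=\tilde f_{i^{(j)}_a}^{\varphi_{i^{(j)}_a}(b^{(j)}_{a-1})}b^{(j)}_{a-1}$. *)

theory Defs
  imports Main
begin

text \<open>Elements of the crystal B for D^(2)_{n+1}: a triple (xs, x0, xbs) where
  xs = [x_1,...,x_n] (so x_k = xs ! (k-1)), x0 is x_0, and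
  xbs = [xbar_1,...,xbar_n] (so xbar_k = xbs ! (k-1)).
  Integers are used so that "falling outside B" can be detected; the zero
  element of the crystal (result 0 of Kashiwara operators) is modelled by None.\<close>

type_synonym crys = "int list \<times> int \<times> int list"

definition xc :: "crys \<Rightarrow> nat \<Rightarrow> int" where
  "xc b k = (case b of (xs, x0, xbs) \<Rightarrow> xs ! (k - 1))"

definition xbc :: "crys \<Rightarrow> nat \<Rightarrow> int" where
  "xbc b k = (case b of (xs, x0, xbs) \<Rightarrow> xbs ! (k - 1))"

definition x0c :: "crys \<Rightarrow> int" where
  "x0c b = fst (snd b)"

definition ssum :: "crys \<Rightarrow> int" where
  "ssum b = (case b of (xs, x0, xbs) \<Rightarrow> sum_list xs + sum_list xbs)"

definition crystalB :: "nat \<Rightarrow> nat \<Rightarrow> crys set" where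
  "crystalB n l = {(xs, x0, xbs). length xs = n \<and> length xbs = n \<and> x0 \<in> {0, 1}
      \<and> (\<forall>v\<in>set xs. 0 \<le> v) \<and> (\<forall>v\<in>set xbs. 0 \<le> v)
      \<and> x0 + sum_list xs + sum_list xbs \<le> int l}"

definition posp :: "int \<Rightarrow> int" where
  "posp x = max x 0"

definition fraw :: "nat \<Rightarrow> nat \<Rightarrow> crys \<Rightarrow> crys" where
  "fraw n i b = (case b of (xs, x0, xbs) \<Rightarrow>
     if i = 0 then
       (if xs ! 0 \<ge> xbs ! 0 then (xs[0 := xs ! 0 + 1], x0, xbs)
        else (xs, x0, xbs[0 := xbs ! 0 - 1]))
     else if i < n then
       (if xs ! i \<ge> xbs ! i
        then (xs[i - 1 := xs ! (i - 1) - 1, i := xs ! i + 1], x0, xbs)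
        else (xs, x0, xbs[i := xbs ! i - 1, i - 1 := xbs ! (i - 1) + 1]))
     else
       (if x0 = 0 then (xs[n - 1 := xs ! (n - 1) - 1], x0 + 1, xbs)
        else (xs, x0 - 1, xbs[n - 1 := xbs ! (n - 1) + 1])))"

definition ftil :: "nat \<Rightarrow> nat \<Rightarrow> nat \<Rightarrow> crys \<Rightarrow> crys option" where
  "ftil n l i b = (if i \<le> n \<and> b \<in> crystalB n l \<and> fraw n i b \<in> crystalB n l
                    then Some (fraw n i b) else None)"

fun fpow :: "nat \<Rightarrow> nat \<Rightarrow> nat \<Rightarrow> nat \<Rightarrow> crys \<Rightarrow> crys option" where
  "fpow n l i 0 b = Some b"
| "fpow n l i (Suc k) b = Option.bind (fpow n l i k b) (ftil n l i)"

definition phi :: "nat \<Rightarrow> nat \<Rightarrow> nat \<Rightarrow> crys \<Rightarrow> int" where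
  "phi n l i b =
    (if i = 0 then int l - x0c b - ssum b + 2 * posp (xbc b 1 - xc b 1)
     else if i < n then xc b i + posp (xbc b (i + 1) - xc b (i + 1))
     else if i = n then 2 * xc b n + x0c b
     else 0)"

definition eps :: "nat \<Rightarrow> nat \<Rightarrow> nat \<Rightarrow> crys \<Rightarrow> int" where
  "eps n l i b =
    (if i = 0 then int l - x0c b - ssum b + 2 * posp (xc b 1 - xbc b 1)
     else if i < n then xbc b i + posp (xc b (i + 1) - xbc b (i + 1))
     else if i = n then 2 * xbc b n + x0c b
     else 0)"

text \<open>lambda_j = l Lambda_0 for all j, so <lambda_j, h_i> = l if i = 0, else 0.\<close>
definition lamh :: "nat \<Rightarrow> nat \<Rightarrow> nat \<Rightarrow> nat" where
  "lamh l j i = (if i = 0 then l else 0)"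

definition zeroB :: "nat \<Rightarrow> crys" where
  "zeroB n = (replicate n 0, 0, replicate n 0)"

fun Bset :: "nat \<Rightarrow> nat \<Rightarrow> (nat \<Rightarrow> nat \<Rightarrow> nat) \<Rightarrow> nat \<Rightarrow> nat \<Rightarrow> crys set" where
  "Bset n l idx j 0 = {zeroB n}"
| "Bset n l idx j (Suc a) =
     {b. \<exists>b'\<in>Bset n l idx j a. \<exists>k. fpow n l (idx j (Suc a)) k b' = Some b}"

fun bseq :: "nat \<Rightarrow> nat \<Rightarrow> (nat \<Rightarrow> nat \<Rightarrow> nat) \<Rightarrow> nat \<Rightarrow> nat \<Rightarrow> crys option" where
  "bseq n l idx j 0 = Some (zeroB n)"
| "bseq n l idx j (Suc a) =
     Option.bind (bseq n l idx j a)
       (\<lambda>b. fpow n l (idx j (Suc a)) (nat (phi n l (idx j (Suc a)) b)) b)"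

end

theory Submission
  imports Defs
begin

(* For a <= n the operators f_0, f_1, ..., f_(n-1) only create x_1 and push weight to the
   right along x_1, ..., x_n, so B_a consists of the elements supported on x_1, ..., x_a.  Then
   f_n turns x_n into x_0 and xbar_n, and f_(n-1), ..., f_1 push weight to the left along
   xbar_n, ..., xbar_1, so B_(n+a) consists of the elements with xbar_1 = ... = xbar_(n-a) = 0;
   for a = n this is all of B.  The inclusion of B_a in such a set holds because the set is
   closed under the relevant f_i.  Conversely every b equals f_i^(eps_i b) applied to the top
   of its i-string, and that top lies in the previous set.  The elements b_a are l times a
   unit vector travelling along the same path, and eps and phi can be read off at them. *)

section \<open>Iterated Kashiwara operators\<close>

lemma sum_list_update_group:
  fixes xs :: "'a::ab_group_add list"
  shows "k < length xs \<Longrightarrow> sum_list (xs[k := x]) = sum_list xs + x - xs ! k"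
  by (induction xs arbitrary: k) (auto split: nat.split)

lemma replicate_update_same [simp]: "(replicate n x)[k := x] = replicate n x"
  by (induction n arbitrary: k) (auto split: nat.split)

lemma crystalB_iff:
  "(xs, x0, xbs) \<in> crystalB n l \<longleftrightarrow>
     length xs = n \<and> length xbs = n \<and> x0 \<in> {0, 1}
     \<and> (\<forall>k<n. 0 \<le> xs ! k) \<and> (\<forall>k<n. 0 \<le> xbs ! k)
     \<and> x0 + sum_list xs + sum_list xbs \<le> int l"
  by (auto simp: crystalB_def all_set_conv_all_nth)

lemma zeroB_in_crystalB: "zeroB n \<in> crystalB n l"
  by (simp add: zeroB_def crystalB_iff sum_list_replicate)

lemma ftil_in_crystalB: "ftil n l i b = Some b' \<Longrightarrow> b' \<in> crystalB n l"
  by (simp add: ftil_def split: if_splits)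

lemma fpow_add: "fpow n l i (k + m) b = Option.bind (fpow n l i k b) (fpow n l i m)"
  by (induction m) simp_all

lemma fpow_invariant:
  assumes "\<And>b b'. b \<in> Q \<Longrightarrow> ftil n l i b = Some b' \<Longrightarrow> b' \<in> Q"
    and "b \<in> Q" and "fpow n l i k b = Some b'"
  shows "b' \<in> Q"
  using assms(3)
proof (induction k arbitrary: b')
  case (Suc k)
  then show ?case using assms(1,2) by (cases "fpow n l i k b") auto
qed (use assms(2) in simp)

lemma fpow_in_crystalB:
  "fpow n l i k b = Some b' \<Longrightarrow> b \<in> crystalB n l \<Longrightarrow> b' \<in> crystalB n l"
  by (rule fpow_invariant[where Q = "crystalB n l"]) (auto intro: ftil_in_crystalB)

lemma fpow_path:
  assumes "i \<le> n" and "\<And>k. k \<le> m \<Longrightarrow> g k \<in> crystalB n l"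
    and "\<And>k. k < m \<Longrightarrow> fraw n i (g k) = g (Suc k)"
  shows "fpow n l i m (g 0) = Some (g m)"
  using assms by (induction m) (auto simp: ftil_def)

lemma fpow_0_from_zeroB:
  assumes "0 < n" "k \<le> l"
  shows "fpow n l 0 k (zeroB n) = Some ((replicate n 0)[0 := int k], 0, replicate n 0)"
proof -
  let ?g = "\<lambda>j. ((replicate n 0)[0 := int j], 0, replicate n (0::int))"
  have "fpow n l 0 k (?g 0) = Some (?g k)"
    by (rule fpow_path) (use assms in \<open>auto simp: crystalB_iff fraw_def nth_list_update
        sum_list_update_group sum_list_replicate algebra_simps\<close>)
  then show ?thesis by (simp add: zeroB_def)
qed

lemma fpow_0_to_zeroB:
  assumes "0 < n"
  shows "fpow n l 0 l (replicate n 0, 0, (replicate n 0)[0 := int l]) = Some (zeroB n)"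
proof -
  let ?g = "\<lambda>j. (replicate n (0::int), 0, (replicate n 0)[0 := int l - int j])"
  have "fpow n l 0 l (?g 0) = Some (?g l)"
    by (rule fpow_path) (use assms in \<open>auto simp: crystalB_iff fraw_def nth_list_update
        sum_list_update_group sum_list_replicate algebra_simps\<close>)
  then show ?thesis by (simp add: zeroB_def)
qed

lemma fpow_mid_x:
  assumes "(xs, x0, xbs) \<in> crystalB n l" "0 < i" "i < n"
    and "xbs ! i \<le> xs ! i" "int m \<le> xs ! (i - 1)"
  shows "fpow n l i m (xs, x0, xbs) =
    Some (xs[i - 1 := xs ! (i - 1) - int m, i := xs ! i + int m], x0, xbs)"
proof -
  let ?g = "\<lambda>j. (xs[i - 1 := xs ! (i - 1) - int j, i := xs ! i + int j], x0, xbs)"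
  have "fpow n l i m (?g 0) = Some (?g m)"
    by (rule fpow_path) (use assms in \<open>auto simp: crystalB_iff fraw_def nth_list_update
        sum_list_update_group list_update_swap algebra_simps\<close>)
  then show ?thesis by simp
qed

lemma fpow_mid_xbar:
  assumes "(xs, x0, xbs) \<in> crystalB n l" "0 < i" "i < n" "xs ! i + int m \<le> xbs ! i"
  shows "fpow n l i m (xs, x0, xbs) =
    Some (xs, x0, xbs[i := xbs ! i - int m, i - 1 := xbs ! (i - 1) + int m])"
proof -
  let ?g = "\<lambda>j. (xs, x0, xbs[i := xbs ! i - int j, i - 1 := xbs ! (i - 1) + int j])"
  have "fpow n l i m (?g 0) = Some (?g m)"
    by (rule fpow_path) (use assms in \<open>auto simp: crystalB_iff fraw_def nth_list_update
        sum_list_update_group list_update_swap algebra_simps\<close>)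
  then show ?thesis by simp
qed

text \<open>Each unit of x_n passes through x_0 on its way to xbar_n, so f_n is iterated in pairs,
  possibly followed by one half step.\<close>

lemma fpow_n:
  assumes "(xs, 0, xbs) \<in> crystalB n l" "0 < n" "r \<le> 1" "int (k + r) \<le> xs ! (n - 1)"
  shows "fpow n l n (2 * k + r) (xs, 0, xbs) =
    Some (xs[n - 1 := xs ! (n - 1) - int (k + r)], int r, xbs[n - 1 := xbs ! (n - 1) + int k])"
proof -
  define m where "m = 2 * k + r"
  have m: "Suc m div 2 = k + r" "m mod 2 = r" "m div 2 = k"
    using assms(3) unfolding m_def by presburger+
  let ?g = "\<lambda>j. (xs[n - 1 := xs ! (n - 1) - int (Suc j div 2)], int (j mod 2),
    xbs[n - 1 := xbs ! (n - 1) + int (j div 2)])"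
  have len: "n - 1 < length xs" "n - 1 < length xbs"
    using assms by (auto simp: crystalB_iff)
  have "fpow n l n m (?g 0) = Some (?g m)"
  proof (rule fpow_path)
    fix j assume "j \<le> m"
    then have "Suc j div 2 \<le> k + r"
      using div_le_mono m(1) by (metis Suc_le_mono)
    moreover have "j mod 2 + j div 2 = Suc j div 2"
      by presburger
    ultimately show "?g j \<in> crystalB n l"
      using assms by (auto simp: crystalB_iff nth_list_update sum_list_update_group)
  next
    fix j
    show "fraw n n (?g j) = ?g (Suc j)"
      using len assms(2) by (cases "even j") (auto simp: fraw_def mod_Suc algebra_simps)
  qed simp
  then have "fpow n l n m (xs, 0, xbs) = Some (?g m)"
    by simp
  also have "?g m =
      (xs[n - 1 := xs ! (n - 1) - int (k + r)], int r, xbs[n - 1 := xbs ! (n - 1) + int k])"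
    by (simp only: m)
  finally show ?thesis
    by (simp only: m_def)
qed

section \<open>Tops of strings\<close>

text \<open>The paper's e_i^max b, the top of the i-string through b, for 0 < i < n and for i = n.\<close>

definition emax_mid :: "nat \<Rightarrow> crys \<Rightarrow> crys" where
  "emax_mid i b = (case b of (xs, x0, xbs) \<Rightarrow>
     let q = posp (xs ! i - xbs ! i) in
     (xs[i - 1 := xs ! (i - 1) + q, i := xs ! i - q], x0,
      xbs[i := xbs ! i + xbs ! (i - 1), i - 1 := 0]))"

definition emax_n :: "nat \<Rightarrow> crys \<Rightarrow> crys" where
  "emax_n n b = (case b of (xs, x0, xbs) \<Rightarrow>
     (xs[n - 1 := xs ! (n - 1) + x0 + xbs ! (n - 1)], 0, xbs[n - 1 := 0]))"

lemma emax_mid_in_crystalB: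
  assumes "b \<in> crystalB n l" "0 < i" "i < n"
  shows "emax_mid i b \<in> crystalB n l"
proof -
  obtain xs x0 xbs where b_eq: "b = (xs, x0, xbs)" by (cases b)
  define q where "q = posp (xs ! i - xbs ! i)"
  have mem: "length xs = n" "length xbs = n" "x0 \<in> {0, 1}"
      "\<forall>k<n. 0 \<le> xs ! k" "\<forall>k<n. 0 \<le> xbs ! k" "x0 + sum_list xs + sum_list xbs \<le> int l"
    using assms(1) by (simp_all add: b_eq crystalB_iff)
  have "0 \<le> q" "q \<le> xs ! i"
    using mem assms(3) by (auto simp: q_def posp_def)
  moreover have "emax_mid i b =
      (xs[i - 1 := xs ! (i - 1) + q, i := xs ! i - q], x0,
       xbs[i := xbs ! i + xbs ! (i - 1), i - 1 := 0])"
    by (simp add: emax_mid_def b_eq q_def Let_def)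
  moreover have "\<forall>k<n. 0 \<le> (xs[i - 1 := xs ! (i - 1) + q, i := xs ! i - q]) ! k"
    using mem assms(3) \<open>0 \<le> q\<close> \<open>q \<le> xs ! i\<close> by (auto simp: nth_list_update)
  moreover have "\<forall>k<n. 0 \<le> (xbs[i := xbs ! i + xbs ! (i - 1), i - 1 := 0]) ! k"
    using mem assms(2,3) by (auto simp: nth_list_update)
  moreover have "sum_list (xs[i - 1 := xs ! (i - 1) + q, i := xs ! i - q]) = sum_list xs"
    using mem assms(2,3) by (simp add: nth_list_update sum_list_update_group)
  moreover have "sum_list (xbs[i := xbs ! i + xbs ! (i - 1), i - 1 := 0]) = sum_list xbs"
    using mem assms(2,3) by (simp add: nth_list_update sum_list_update_group)
  ultimately show ?thesis
    using mem by (simp add: crystalB_iff)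
qed

text \<open>From the top, f_i first refills xbar_i from xbar_(i+1), and only then moves the surplus
  (x_(i+1) - xbar_(i+1))_+ back from x_i to x_(i+1).\<close>

lemma fpow_eps_emax_mid:
  assumes b: "b \<in> crystalB n l" and i: "0 < i" "i < n"
  shows "fpow n l i (nat (eps n l i b)) (emax_mid i b) = Some b"
proof -
  obtain xs x0 xbs where b_eq: "b = (xs, x0, xbs)" by (cases b)
  define t where "t = xbs ! (i - 1)"
  define q where "q = posp (xs ! i - xbs ! i)"
  define xs1 where "xs1 = xs[i - 1 := xs ! (i - 1) + q, i := xs ! i - q]"
  have len: "length xs = n" "length xbs = n"
    and nonneg: "0 \<le> t" "0 \<le> q" "0 \<le> xs ! (i - 1)"
    using b i by (auto simp: b_eq crystalB_iff t_def q_def posp_def)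
  have top: "emax_mid i b = (xs1, x0, xbs[i := xbs ! i + t, i - 1 := 0])"
    by (simp add: emax_mid_def Let_def b_eq xs1_def t_def q_def)
  have eps: "nat (eps n l i b) = nat t + nat q"
    using i nonneg by (simp add: eps_def b_eq xc_def xbc_def t_def q_def)
  have refill: "fpow n l i (nat t) (emax_mid i b) = Some (xs1, x0, xbs)"
  proof -
    have "fpow n l i (nat t) (emax_mid i b) =
        Some (xs1, x0, (xbs[i := xbs ! i + t, i - 1 := 0])[i := xbs ! i + t - t, i - 1 := 0 + t])"
      unfolding top using emax_mid_in_crystalB[OF b i] i len nonneg
      by (subst fpow_mid_xbar) (auto simp: top xs1_def q_def posp_def nth_list_update)
    also have "\<dots> = Some (xs1, x0, xbs)"
      using i len by (simp add: t_def list_update_swap)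
    finally show ?thesis .
  qed
  have surplus: "fpow n l i (nat q) (xs1, x0, xbs) = Some b"
  proof (cases "q = 0")
    case True
    then show ?thesis by (simp add: xs1_def b_eq)
  next
    case False
    have "(xs1, x0, xbs) \<in> crystalB n l"
      using fpow_in_crystalB[OF refill emax_mid_in_crystalB[OF b i]] .
    then have "fpow n l i (nat q) (xs1, x0, xbs) =
        Some (xs1[i - 1 := xs1 ! (i - 1) - q, i := xs1 ! i + q], x0, xbs)"
      using False i len nonneg
      by (subst fpow_mid_x) (auto simp: xs1_def q_def posp_def nth_list_update)
    also have "\<dots> = Some b"
      using i len by (simp add: xs1_def b_eq nth_list_update list_update_swap)
    finally show ?thesis .
  qed
  show ?thesis
    using refill surplus by (simp add: eps fpow_add)
qed

lemma emax_n_in_crystalB: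
  assumes "b \<in> crystalB n l" "0 < n"
  shows "emax_n n b \<in> crystalB n l"
proof -
  obtain xs x0 xbs where b_eq: "b = (xs, x0, xbs)" by (cases b)
  define t where "t = xbs ! (n - 1)"
  have mem: "length xs = n" "length xbs = n" "x0 \<in> {0, 1}"
      "\<forall>k<n. 0 \<le> xs ! k" "\<forall>k<n. 0 \<le> xbs ! k" "x0 + sum_list xs + sum_list xbs \<le> int l"
    using assms(1) by (simp_all add: b_eq crystalB_iff)
  have "sum_list (xs[n - 1 := xs ! (n - 1) + x0 + t]) = sum_list xs + x0 + t"
       "sum_list (xbs[n - 1 := 0]) = sum_list xbs - t"
    using assms(2) mem by (simp_all add: sum_list_update_group t_def)
  moreover have "\<forall>k<n. 0 \<le> (xs[n - 1 := xs ! (n - 1) + x0 + t]) ! k"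
      "\<forall>k<n. 0 \<le> (xbs[n - 1 := 0]) ! k"
    using mem assms(2) by (auto simp: nth_list_update t_def)
  moreover have "emax_n n b = (xs[n - 1 := xs ! (n - 1) + x0 + t], 0, xbs[n - 1 := 0])"
    by (simp add: emax_n_def b_eq t_def)
  ultimately show ?thesis
    using mem by (simp add: crystalB_iff)
qed

lemma fpow_eps_emax_n:
  assumes b: "b \<in> crystalB n l" and n: "0 < n"
  shows "fpow n l n (nat (eps n l n b)) (emax_n n b) = Some b"
proof -
  obtain xs x0 xbs where b_eq: "b = (xs, x0, xbs)" by (cases b)
  define t where "t = xbs ! (n - 1)"
  have x0: "x0 \<in> {0, 1}" and nonneg: "0 \<le> xs ! (n - 1)" "0 \<le> t"
    and len: "n - 1 < length xs" "n - 1 < length xbs"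
    using b n by (auto simp: b_eq crystalB_iff t_def)
  have top: "emax_n n b = (xs[n - 1 := xs ! (n - 1) + x0 + t], 0, xbs[n - 1 := 0])"
    by (simp add: emax_n_def b_eq t_def)
  have eps: "nat (eps n l n b) = 2 * nat t + nat x0"
    using n nonneg x0 by (auto simp: eps_def b_eq xbc_def x0c_def t_def)
  show ?thesis
    using emax_n_in_crystalB[OF b n] n nonneg x0 len unfolding top eps
    by (subst fpow_n) (auto simp: b_eq t_def)
qed

section \<open>The sets B_a\<close>

text \<open>List positions are 0-based: xs ! k is the coordinate x_(k+1).  Thus x_only n l a is the
  set B_a for 1 <= a <= n, and xbar_zero_upto n l (n - a) is B_(n+a).\<close>

definition x_only :: "nat \<Rightarrow> nat \<Rightarrow> nat \<Rightarrow> crys set" where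
  "x_only n l a = {(xs, x0, xbs). (xs, x0, xbs) \<in> crystalB n l \<and> x0 = 0
      \<and> (\<forall>k<n. xbs ! k = 0) \<and> (\<forall>k. a \<le> k \<and> k < n \<longrightarrow> xs ! k = 0)}"

definition xbar_zero_upto :: "nat \<Rightarrow> nat \<Rightarrow> nat \<Rightarrow> crys set" where
  "xbar_zero_upto n l c =
     {(xs, x0, xbs). (xs, x0, xbs) \<in> crystalB n l \<and> (\<forall>k<c. xbs ! k = 0)}"

lemma x_only_mono: "a \<le> a' \<Longrightarrow> x_only n l a \<subseteq> x_only n l a'"
  by (auto simp: x_only_def)

lemma xbar_zero_upto_antimono: "c' \<le> c \<Longrightarrow> xbar_zero_upto n l c \<subseteq> xbar_zero_upto n l c'"
  by (auto simp: xbar_zero_upto_def)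

lemma x_only_subset_xbar_zero_upto: "c \<le> n \<Longrightarrow> x_only n l a \<subseteq> xbar_zero_upto n l c"
  by (auto simp: x_only_def xbar_zero_upto_def)

lemma xbar_zero_upto_0: "xbar_zero_upto n l 0 = crystalB n l"
  by (auto simp: xbar_zero_upto_def)

lemma ftil_0_x_only:
  "0 < n \<Longrightarrow> b \<in> x_only n l 1 \<Longrightarrow> ftil n l 0 b = Some b' \<Longrightarrow> b' \<in> x_only n l 1"
  using ftil_in_crystalB[of n l 0 b b']
  by (cases b) (auto simp: x_only_def ftil_def fraw_def nth_list_update crystalB_iff
      split: if_splits)

lemma ftil_mid_x_only:
  "0 < a \<Longrightarrow> a < n \<Longrightarrow> b \<in> x_only n l (Suc a) \<Longrightarrow> ftil n l a b = Some b' \<Longrightarrow>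
    b' \<in> x_only n l (Suc a)"
  using ftil_in_crystalB[of n l a b b']
  by (cases b) (auto simp: x_only_def ftil_def fraw_def nth_list_update crystalB_iff
      split: if_splits)

lemma ftil_n_xbar_zero_upto:
  "b \<in> xbar_zero_upto n l (n - 1) \<Longrightarrow> ftil n l n b = Some b' \<Longrightarrow>
    b' \<in> xbar_zero_upto n l (n - 1)"
  using ftil_in_crystalB[of n l n b b']
  by (cases b) (auto simp: xbar_zero_upto_def ftil_def fraw_def nth_list_update split: if_splits)

lemma ftil_mid_xbar_zero_upto:
  "0 < i \<Longrightarrow> i < n \<Longrightarrow> b \<in> xbar_zero_upto n l (i - 1) \<Longrightarrow> ftil n l i b = Some b' \<Longrightarrow>
    b' \<in> xbar_zero_upto n l (i - 1)"
  using ftil_in_crystalB[of n l i b b']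
  by (cases b) (auto simp: xbar_zero_upto_def ftil_def fraw_def nth_list_update split: if_splits)

lemma emax_mid_x_only:
  assumes "b \<in> x_only n l (Suc i)" "0 < i" "i < n"
  shows "emax_mid i b \<in> x_only n l i"
proof -
  have "emax_mid i b \<in> crystalB n l"
    using assms by (intro emax_mid_in_crystalB) (auto simp: x_only_def)
  then show ?thesis
    using assms by (cases b) (auto simp: x_only_def emax_mid_def Let_def posp_def
        nth_list_update crystalB_iff)
qed

lemma emax_mid_xbar_zero_upto:
  assumes "b \<in> xbar_zero_upto n l (i - 1)" "0 < i" "i < n"
  shows "emax_mid i b \<in> xbar_zero_upto n l i"
proof -
  have "emax_mid i b \<in> crystalB n l"
    using assms by (intro emax_mid_in_crystalB) (auto simp: xbar_zero_upto_def)
  then show ?thesis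
    using assms by (cases b) (auto simp: xbar_zero_upto_def emax_mid_def Let_def
        nth_list_update crystalB_iff)
qed

lemma emax_n_x_only:
  assumes "b \<in> xbar_zero_upto n l (n - 1)" "0 < n"
  shows "emax_n n b \<in> x_only n l n"
proof -
  have "emax_n n b \<in> crystalB n l"
    using assms by (intro emax_n_in_crystalB) (auto simp: xbar_zero_upto_def)
  then show ?thesis
    using assms by (cases b) (auto simp: x_only_def xbar_zero_upto_def emax_n_def
        nth_list_update crystalB_iff)
qed

lemma x_only_1_reachable:
  assumes "b \<in> x_only n l 1" "0 < n"
  shows "\<exists>k. fpow n l 0 k (zeroB n) = Some b"
proof -
  obtain xs xbs where b_eq: "b = (xs, 0, xbs)" and mem: "(xs, 0, xbs) \<in> crystalB n l"
    and zero: "\<forall>k<n. xbs ! k = 0" "\<forall>k. 1 \<le> k \<and> k < n \<longrightarrow> xs ! k = 0"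
    using assms(1) by (auto simp: x_only_def)
  have xbs: "xbs = replicate n 0"
    using mem zero by (simp add: crystalB_iff list_eq_iff_nth_eq)
  have xs: "xs = (replicate n 0)[0 := xs ! 0]"
    using mem zero by (auto simp: crystalB_iff list_eq_iff_nth_eq nth_list_update)
  have "sum_list ((replicate n 0)[0 := xs ! 0]) = xs ! 0"
    using assms(2) by (simp add: sum_list_update_group sum_list_replicate)
  then have "sum_list xs = xs ! 0"
    using xs by simp
  then have "nat (xs ! 0) \<le> l" "0 \<le> xs ! 0"
    using mem assms(2) by (auto simp: crystalB_iff xbs sum_list_replicate)
  then have "fpow n l 0 (nat (xs ! 0)) (zeroB n) = Some b"
    using fpow_0_from_zeroB[OF assms(2)] xs by (simp add: b_eq xbs)
  then show ?thesis ..
qed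

lemma Bset_Suc_subset:
  assumes "Bset n l idx j a \<subseteq> Q"
    and "\<And>b b'. b \<in> Q \<Longrightarrow> ftil n l (idx j (Suc a)) b = Some b' \<Longrightarrow> b' \<in> Q"
  shows "Bset n l idx j (Suc a) \<subseteq> Q"
proof
  fix b assume "b \<in> Bset n l idx j (Suc a)"
  then obtain b' k where "b' \<in> Bset n l idx j a" "fpow n l (idx j (Suc a)) k b' = Some b"
    by auto
  then show "b \<in> Q"
    using assms fpow_invariant[of Q n l "idx j (Suc a)"] by blast
qed

lemma Bset_subset_crystalB: "Bset n l idx j a \<subseteq> crystalB n l"
proof (induction a)
  case (Suc a)
  then show ?case using Bset_Suc_subset ftil_in_crystalB by metis
qed (simp add: zeroB_in_crystalB)

definition idx_seq :: "nat \<Rightarrow> nat \<Rightarrow> nat \<Rightarrow> nat" where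
  "idx_seq n j a = (if a \<le> n + 1 then a - 1 else 2 * n + 1 - a)"

lemma Bset_idx_seq_x_only:
  "1 \<le> a \<Longrightarrow> a \<le> n \<Longrightarrow> Bset n l (idx_seq n) j a = x_only n l a"
proof (induction a rule: nat_induct_at_least)
  case base
  have idx: "idx_seq n j (Suc 0) = 0"
    by (simp add: idx_seq_def)
  have "Bset n l (idx_seq n) j (Suc 0) \<subseteq> x_only n l 1"
  proof (rule Bset_Suc_subset)
    show "Bset n l (idx_seq n) j 0 \<subseteq> x_only n l 1"
      using zeroB_in_crystalB[of n l] by (simp add: x_only_def zeroB_def)
  qed (use base ftil_0_x_only in \<open>simp add: idx\<close>)
  moreover have "x_only n l 1 \<subseteq> Bset n l (idx_seq n) j (Suc 0)"
    using base x_only_1_reachable by (auto simp: idx)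
  ultimately show ?case by auto
next
  case (Suc a)
  then have IH: "Bset n l (idx_seq n) j a = x_only n l a"
    by simp
  have idx: "idx_seq n j (Suc a) = a"
    using Suc by (simp add: idx_seq_def)
  have "Bset n l (idx_seq n) j (Suc a) \<subseteq> x_only n l (Suc a)"
  proof (rule Bset_Suc_subset)
    show "Bset n l (idx_seq n) j a \<subseteq> x_only n l (Suc a)"
      unfolding IH by (rule x_only_mono) simp
  qed (use Suc ftil_mid_x_only[of a n] in \<open>simp add: idx\<close>)
  moreover have "x_only n l (Suc a) \<subseteq> Bset n l (idx_seq n) j (Suc a)"
  proof
    fix b assume b: "b \<in> x_only n l (Suc a)"
    then have "emax_mid a b \<in> Bset n l (idx_seq n) j a"
      using Suc emax_mid_x_only IH by simp
    moreover have "fpow n l a (nat (eps n l a b)) (emax_mid a b) = Some b"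
      using b Suc by (intro fpow_eps_emax_mid) (auto simp: x_only_def)
    ultimately show "b \<in> Bset n l (idx_seq n) j (Suc a)"
      by (auto simp: idx)
  qed
  ultimately show ?case by auto
qed

lemma Bset_idx_seq_xbar_zero_upto:
  "1 \<le> a \<Longrightarrow> a \<le> n \<Longrightarrow> Bset n l (idx_seq n) j (n + a) = xbar_zero_upto n l (n - a)"
proof (induction a rule: nat_induct_at_least)
  case base
  have IH: "Bset n l (idx_seq n) j n = x_only n l n"
    using base Bset_idx_seq_x_only by simp
  have idx: "idx_seq n j (Suc n) = n"
    by (simp add: idx_seq_def)
  have "Bset n l (idx_seq n) j (Suc n) \<subseteq> xbar_zero_upto n l (n - 1)"
  proof (rule Bset_Suc_subset)
    show "Bset n l (idx_seq n) j n \<subseteq> xbar_zero_upto n l (n - 1)"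
      unfolding IH by (rule x_only_subset_xbar_zero_upto) simp
  qed (use ftil_n_xbar_zero_upto in \<open>simp add: idx\<close>)
  moreover have "xbar_zero_upto n l (n - 1) \<subseteq> Bset n l (idx_seq n) j (Suc n)"
  proof
    fix b assume b: "b \<in> xbar_zero_upto n l (n - 1)"
    then have "emax_n n b \<in> Bset n l (idx_seq n) j n"
      using base emax_n_x_only IH by simp
    moreover have "fpow n l n (nat (eps n l n b)) (emax_n n b) = Some b"
      using b base by (intro fpow_eps_emax_n) (auto simp: xbar_zero_upto_def)
    ultimately show "b \<in> Bset n l (idx_seq n) j (Suc n)"
      by (auto simp: idx)
  qed
  ultimately show ?case by auto
next
  case (Suc a)
  then have IH: "Bset n l (idx_seq n) j (n + a) = xbar_zero_upto n l (n - a)"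
    by simp
  have idx: "idx_seq n j (Suc (n + a)) = n - a"
    using Suc by (simp add: idx_seq_def)
  have i: "0 < n - a" "n - a < n" "n - a - 1 = n - Suc a"
    using Suc by auto
  have "Bset n l (idx_seq n) j (Suc (n + a)) \<subseteq> xbar_zero_upto n l (n - Suc a)"
  proof (rule Bset_Suc_subset)
    show "Bset n l (idx_seq n) j (n + a) \<subseteq> xbar_zero_upto n l (n - Suc a)"
      unfolding IH by (rule xbar_zero_upto_antimono) simp
  qed (use ftil_mid_xbar_zero_upto[OF i(1,2)] in \<open>simp add: idx i(3)\<close>)
  moreover have "xbar_zero_upto n l (n - Suc a) \<subseteq> Bset n l (idx_seq n) j (Suc (n + a))"
  proof
    fix b assume b: "b \<in> xbar_zero_upto n l (n - Suc a)"
    then have "emax_mid (n - a) b \<in> Bset n l (idx_seq n) j (n + a)"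
      using emax_mid_xbar_zero_upto[OF _ i(1,2)] IH by (simp add: i(3))
    moreover have "fpow n l (n - a) (nat (eps n l (n - a) b)) (emax_mid (n - a) b) = Some b"
      using b i by (intro fpow_eps_emax_mid) (auto simp: xbar_zero_upto_def)
    ultimately show "b \<in> Bset n l (idx_seq n) j (Suc (n + a))"
      by (auto simp: idx)
  qed
  ultimately show ?case by simp
qed

lemma ball_greaterThanAtMost_shift:
  "(\<forall>k\<in>{a<..b}. P (k - 1)) \<longleftrightarrow> (\<forall>k. a \<le> k \<and> k < b \<longrightarrow> P (k :: nat))"
  by (auto simp flip: image_Suc_atLeastLessThan atLeastLessThanSuc_atLeastAtMost
      simp: atLeastSucAtMost_greaterThanAtMost[symmetric])

lemma x_only_eq_coords:
  "x_only n l a = {b \<in> crystalB n l. x0c b = 0 \<and> (\<forall>k\<in>{1..n}. xbc b k = 0)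
                                     \<and> (\<forall>k\<in>{a<..n}. xc b k = 0)}"
proof (rule set_eqI)
  fix b :: crys
  obtain xs x0 xbs where b_eq: "b = (xs, x0, xbs)" by (cases b)
  show "b \<in> x_only n l a \<longleftrightarrow> b \<in> {b \<in> crystalB n l. x0c b = 0
      \<and> (\<forall>k\<in>{1..n}. xbc b k = 0) \<and> (\<forall>k\<in>{a<..n}. xc b k = 0)}"
    using ball_greaterThanAtMost_shift[of 0 n "\<lambda>k. xbs ! k = 0"]
      ball_greaterThanAtMost_shift[of a n "\<lambda>k. xs ! k = 0"]
    by (simp add: b_eq x_only_def xc_def xbc_def x0c_def atLeastSucAtMost_greaterThanAtMost)
qed

lemma xbar_zero_upto_eq_coords:
  "xbar_zero_upto n l c = {b \<in> crystalB n l. \<forall>k\<in>{1..<c + 1}. xbc b k = 0}"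
proof (rule set_eqI)
  fix b :: crys
  obtain xs x0 xbs where b_eq: "b = (xs, x0, xbs)" by (cases b)
  show "b \<in> xbar_zero_upto n l c \<longleftrightarrow> b \<in> {b \<in> crystalB n l. \<forall>k\<in>{1..<c + 1}. xbc b k = 0}"
    using ball_greaterThanAtMost_shift[of 0 c "\<lambda>k. xbs ! k = 0"]
    by (simp add: b_eq xbar_zero_upto_def xbc_def atLeastLessThanSuc_atLeastAtMost
        atLeastSucAtMost_greaterThanAtMost)
qed

section \<open>The elements b_a\<close>

definition pure_x :: "nat \<Rightarrow> nat \<Rightarrow> nat \<Rightarrow> crys" where
  "pure_x n l k = ((replicate n 0)[k := int l], 0, replicate n 0)"

definition pure_xbar :: "nat \<Rightarrow> nat \<Rightarrow> nat \<Rightarrow> crys" where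
  "pure_xbar n l k = (replicate n 0, 0, (replicate n 0)[k := int l])"

lemma pure_x_in_crystalB: "k < n \<Longrightarrow> pure_x n l k \<in> crystalB n l"
  by (simp add: pure_x_def crystalB_iff nth_list_update sum_list_update_group
      sum_list_replicate)

lemma pure_xbar_in_crystalB: "k < n \<Longrightarrow> pure_xbar n l k \<in> crystalB n l"
  by (simp add: pure_xbar_def crystalB_iff nth_list_update sum_list_update_group
      sum_list_replicate)

lemma bseq_idx_seq_pure_x:
  "1 \<le> a \<Longrightarrow> a \<le> n \<Longrightarrow> bseq n l (idx_seq n) j a = Some (pure_x n l (a - 1))"
proof (induction a rule: nat_induct_at_least)
  case base
  have "phi n l 0 (zeroB n) = int l"
    using base by (simp add: phi_def x0c_def ssum_def xc_def xbc_def zeroB_def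
        sum_list_replicate posp_def)
  then show ?case
    using fpow_0_from_zeroB[of n l l] base by (simp add: idx_seq_def pure_x_def)
next
  case (Suc a)
  have "phi n l a (pure_x n l (a - 1)) = int l"
    using Suc by (simp add: phi_def xc_def xbc_def pure_x_def posp_def nth_list_update)
  moreover have "fpow n l a l (pure_x n l (a - 1)) = Some (pure_x n l a)"
  proof -
    let ?xs = "(replicate n 0)[a - 1 := int l]"
    have "fpow n l a l (?xs, 0, replicate n 0) =
        Some (?xs[a - 1 := ?xs ! (a - 1) - int l, a := ?xs ! a + int l], 0, replicate n 0)"
      using pure_x_in_crystalB[of "a - 1" n l] Suc
      by (intro fpow_mid_x) (simp_all add: pure_x_def nth_list_update)
    then show ?thesis
      using Suc by (simp add: pure_x_def nth_list_update list_update_swap)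
  qed
  ultimately show ?case
    using Suc by (simp add: idx_seq_def)
qed

lemma bseq_idx_seq_pure_xbar:
  "1 \<le> a \<Longrightarrow> a \<le> n \<Longrightarrow> bseq n l (idx_seq n) j (n + a) = Some (pure_xbar n l (n - a))"
proof (induction a rule: nat_induct_at_least)
  case base
  have "phi n l n (pure_x n l (n - 1)) = 2 * int l"
    using base by (simp add: phi_def xc_def x0c_def pure_x_def)
  moreover have "fpow n l n (2 * l) (pure_x n l (n - 1)) = Some (pure_xbar n l (n - 1))"
    using pure_x_in_crystalB[of "n - 1" n l] fpow_n[where r = 0 and k = l] base
    by (simp add: pure_x_def pure_xbar_def)
  moreover have "idx_seq n j (Suc n) = n"
    by (simp add: idx_seq_def)
  ultimately show ?case
    using base bseq_idx_seq_pure_x[of n n l j] by (simp add: nat_mult_distrib)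
next
  case (Suc a)
  have "phi n l (n - a) (pure_xbar n l (n - a)) = int l"
    using Suc by (simp add: phi_def xc_def xbc_def pure_xbar_def posp_def nth_list_update)
  moreover have "fpow n l (n - a) l (pure_xbar n l (n - a)) = Some (pure_xbar n l (n - Suc a))"
  proof -
    let ?xbs = "(replicate n 0)[n - a := int l]"
    have "fpow n l (n - a) l (replicate n 0, 0, ?xbs) =
        Some (replicate n 0, 0,
              ?xbs[n - a := ?xbs ! (n - a) - int l, n - a - 1 := ?xbs ! (n - a - 1) + int l])"
      using pure_xbar_in_crystalB[of "n - a" n l] Suc
      by (intro fpow_mid_xbar) (simp_all add: pure_xbar_def nth_list_update)
    then show ?thesis
      using Suc by (simp add: pure_xbar_def nth_list_update list_update_swap)
  qed
  ultimately show ?case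
    using Suc by (simp add: idx_seq_def)
qed

lemma eps_phi_pure_x_mid:
  "0 < i \<Longrightarrow> i < n \<Longrightarrow>
    eps n l i (pure_x n l (i - 1)) = 0 \<and> phi n l i (pure_x n l (i - 1)) = int l"
  by (simp add: eps_def phi_def pure_x_def xc_def xbc_def posp_def nth_list_update)

lemma eps_phi_pure_x_n:
  "0 < n \<Longrightarrow>
    eps n l n (pure_x n l (n - 1)) = 0 \<and> phi n l n (pure_x n l (n - 1)) = 2 * int l"
  by (simp add: eps_def phi_def pure_x_def xc_def xbc_def x0c_def)

lemma eps_phi_pure_xbar_mid:
  "0 < i \<Longrightarrow> i < n \<Longrightarrow>
    eps n l i (pure_xbar n l i) = 0 \<and> phi n l i (pure_xbar n l i) = int l"
  by (simp add: eps_def phi_def pure_xbar_def xc_def xbc_def posp_def nth_list_update)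

lemma eps_phi_pure_xbar_0:
  "0 < n \<Longrightarrow>
    eps n l 0 (pure_xbar n l 0) = 0 \<and> phi n l 0 (pure_xbar n l 0) = 2 * int l"
  by (simp add: eps_def phi_def pure_xbar_def xc_def xbc_def x0c_def ssum_def posp_def
      sum_list_update_group sum_list_replicate)

lemma bseq_idx_seq_string_top:
  assumes "a \<in> {1..2 * n}" "1 \<le> l"
  shows "\<exists>b. bseq n l (idx_seq n) j a = Some b
    \<and> eps n l (idx_seq n j (a + 1)) b = 0 \<and> 0 < phi n l (idx_seq n j (a + 1)) b"
proof -
  have "1 \<le> a" "a \<le> 2 * n"
    using assms(1) by simp_all
  then consider "a < n" | "a = n" | "n < a" "a < 2 * n" | "a = 2 * n"
    by linarith
  then show ?thesis
  proof cases
    case 1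
    have "bseq n l (idx_seq n) j a = Some (pure_x n l (a - 1))"
      using 1 \<open>1 \<le> a\<close> bseq_idx_seq_pure_x[of a n l j] by simp
    moreover have "idx_seq n j (a + 1) = a"
      using 1 by (simp add: idx_seq_def)
    ultimately show ?thesis
      using 1 \<open>1 \<le> a\<close> assms(2) eps_phi_pure_x_mid[of a n l] by simp
  next
    case 2
    have "bseq n l (idx_seq n) j a = Some (pure_x n l (n - 1))"
      using 2 \<open>1 \<le> a\<close> bseq_idx_seq_pure_x[of n n l j] by simp
    moreover have "idx_seq n j (a + 1) = n"
      using 2 by (simp add: idx_seq_def)
    ultimately show ?thesis
      using 2 \<open>1 \<le> a\<close> assms(2) eps_phi_pure_x_n[of n l] by simp
  next
    case 3
    define i where "i = 2 * n - a"
    have i: "0 < i" "i < n" "n + (n - i) = a"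
      using 3 by (simp_all add: i_def)
    have "bseq n l (idx_seq n) j a = Some (pure_xbar n l i)"
      using i bseq_idx_seq_pure_xbar[of "n - i" n l j] by simp
    moreover have "idx_seq n j (a + 1) = i"
      using 3 by (simp add: idx_seq_def i_def)
    ultimately show ?thesis
      using i assms(2) eps_phi_pure_xbar_mid[of i n l] by simp
  next
    case 4
    have "bseq n l (idx_seq n) j a = Some (pure_xbar n l 0)"
      using 4 \<open>1 \<le> a\<close> bseq_idx_seq_pure_xbar[of n n l j] by (simp add: mult_2)
    moreover have "idx_seq n j (a + 1) = 0"
      using 4 by (simp add: idx_seq_def)
    ultimately show ?thesis
      using 4 \<open>1 \<le> a\<close> assms(2) eps_phi_pure_xbar_0[of n l] by simp
  qed
qed

lemma eps_nonneg: "b \<in> crystalB n l \<Longrightarrow> 0 < i \<Longrightarrow> i \<le> n \<Longrightarrow> 0 \<le> eps n l i b"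
  by (cases b) (auto simp: eps_def crystalB_iff xc_def xbc_def x0c_def posp_def)

lemma lamh_le_eps_Bset_idx_seq:
  assumes "a \<in> {1..2 * n}" "b \<in> Bset n l (idx_seq n) j (a - 1)"
  shows "int (lamh l j (idx_seq n j a)) \<le> eps n l (idx_seq n j a) b"
proof (cases "a = 1")
  case True
  then have "b = zeroB n"
    using assms(2) by simp
  then show ?thesis
    using True by (simp add: idx_seq_def lamh_def eps_def x0c_def ssum_def zeroB_def
        sum_list_replicate posp_def)
next
  case False
  then have "0 < idx_seq n j a" "idx_seq n j a \<le> n"
    using assms(1) by (auto simp: idx_seq_def)
  moreover have "b \<in> crystalB n l"
    using Bset_subset_crystalB assms(2) by blast
  ultimately show ?thesis
    using eps_nonneg by (simp add: lamh_def)
qed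

theorem mainTheorem7:
  fixes n l :: nat and d :: nat and idx :: "nat \<Rightarrow> nat \<Rightarrow> nat"
  assumes "n \<ge> 2" and "l \<ge> 1"
  defines "d \<equiv> 2 * n"
      and "idx \<equiv> (\<lambda>j a. if a \<le> n + 1 then a - 1 else 2 * n + 1 - a)"
  shows
    "(\<forall>j\<ge>1. Bset n l idx j d = crystalB n l)
   \<and> (\<forall>j\<ge>1. \<forall>a\<in>{1..d}. \<forall>b\<in>Bset n l idx j (a - 1).
        int (lamh l j (idx j a)) \<le> eps n l (idx j a) b)
   \<and> (\<forall>j\<ge>1. \<forall>a\<in>{1..d}.
        (let i' = (if a = d then idx (j + 1) 1 else idx j (a + 1)) in
          \<exists>b. bseq n l idx j a = Some b \<and> eps n l i' b = 0 \<and> phi n l i' b > 0))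
   \<and> (\<forall>j\<ge>1. \<exists>b. bseq n l idx j d = Some b \<and>
        fpow n l (idx (j + 1) 1) (lamh l (j + 1) (idx (j + 1) 1)) b = bseq n l idx (j + 1) 0)
   \<and> (\<forall>j\<ge>1. Bset n l idx j 0 = {zeroB n} \<and> Bset n l idx j (2 * n) = crystalB n l)
   \<and> (\<forall>j\<ge>1. \<forall>a\<in>{1..n}. Bset n l idx j a =
        {b \<in> crystalB n l. x0c b = 0 \<and> (\<forall>k\<in>{1..n}. xbc b k = 0)
                           \<and> (\<forall>k\<in>{a<..n}. xc b k = 0)})
   \<and> (\<forall>j\<ge>1. \<forall>a\<in>{1..n - 1}. Bset n l idx j (n + a) =
        {b \<in> crystalB n l. \<forall>k\<in>{1..<n - a + 1}. xbc b k = 0})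
   \<and> (\<forall>j\<ge>1. bseq n l idx j 0 = Some (zeroB n))
   \<and> (\<forall>j\<ge>1. \<forall>a\<in>{1..n}.
        bseq n l idx j a = Some ((replicate n 0)[a - 1 := int l], 0, replicate n 0)
      \<and> bseq n l idx j (n + a) = Some (replicate n 0, 0, (replicate n 0)[n - a := int l]))"proof -
  have idx: "idx = idx_seq n" and n: "0 < n"
    using assms(1) by (simp_all add: idx_def idx_seq_def fun_eq_iff)
  have next_idx:
    "(if a = 2 * n then idx_seq n (j + 1) 1 else idx_seq n j (a + 1)) = idx_seq n j (a + 1)"
    for j a by (simp add: idx_seq_def)
  have B_2n: "Bset n l (idx_seq n) j (2 * n) = crystalB n l" for j
    using Bset_idx_seq_xbar_zero_upto[of n n l j] n by (simp add: mult_2 xbar_zero_upto_0)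
  have wrap: "\<exists>b. bseq n l (idx_seq n) j (2 * n) = Some b
      \<and> fpow n l (idx_seq n (j + 1) 1) (lamh l (j + 1) (idx_seq n (j + 1) 1)) b
        = bseq n l (idx_seq n) (j + 1) 0" for j
    using fpow_0_to_zeroB[OF n] bseq_idx_seq_pure_xbar[of n n l j] n
    by (simp add: idx_seq_def lamh_def pure_xbar_def mult_2)
  have B_xbar: "Bset n l (idx_seq n) j (n + a) =
      {b \<in> crystalB n l. \<forall>k\<in>{1..<n - a + 1}. xbc b k = 0}" if "a \<in> {1..n - 1}" for j a
    using that Bset_idx_seq_xbar_zero_upto[of a n] xbar_zero_upto_eq_coords by force
  show ?thesis
    unfolding idx d_def Let_def next_idx
    using B_2n wrap B_xbar lamh_le_eps_Bset_idx_seq bseq_idx_seq_string_top[OF _ assms(2)]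
      Bset_idx_seq_x_only x_only_eq_coords bseq_idx_seq_pure_x bseq_idx_seq_pure_xbar
    by (simp add: pure_x_def pure_xbar_def)
qed

end
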